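(* Let $\mathbf{D}\in\mathbb{R}^{n\times n}$, positive integers $k_0,k_1$, hyperparameters $\lambda,\mu>0$, and bounds $\beta,\gamma>0$ be given. Let $\mathbf{E}$ be the $n\times n$ all-ones matrix. Consider the relaxation $$\begin{aligned}\text{(A)}\quad \min_{\mathbf{X}, \mathbf{Y}, \mathbf{V}, \mathbf{W}_1, \mathbf{W}_2 \in \mathbb{R}^{n \times n}} \ & \Vert\mathbf{D} - \mathbf{X} - \mathbf{Y}\Vert_F^2 + \lambda \Vert \mathbf{X} \Vert_F^2 + \mu \Vert \mathbf{Y} \Vert_F^2 \\ \text{s.t.}\ & -\mathbf{V} \leq \mathbf{Y} \leq \mathbf{V},\ \tfrac{1}{\gamma} \langle \mathbf{E}, \mathbf{V}\rangle \leq k_1,\ \tfrac{1}{2\beta} \mathrm{tr}(\mathbf{W}_1)+\tfrac{1}{2\beta}\mathrm{tr}(\mathbf{W}_2) \leq k_0,\ \begin{pmatrix}\mathbf{W}_1 & \mathbf{X}\\ \mathbf{X}^T & \mathbf{W}_2\end{pmatrix} \succeq 0,\end{aligned}$$ and the relaxation $$\begin{aligned}\text{(B)}\quad \min_{\mathbf{X}, \mathbf{Y}, \mathbf{Z}, \mathbf{P}_c, \mathbf{P}_r, \mathbf{\Theta}, \boldsymbol{\alpha} \in \mathbb{R}^{n \times n}} \ & \Vert\mathbf{D} - \mathbf{X} - \mathbf{Y}\Vert_F^2 + \lambda\, \mathrm{tr}(\mathbf{\Theta}) + \mu \langle \mathbf{E}, \boldsymbol{\alpha}\rangle \\ \text{s.t.}\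 & \mathbf{Y} \circ \mathbf{Y} \leq \boldsymbol{\alpha} \circ \mathbf{Z},\ \langle \mathbf{E}, \mathbf{Z}\rangle \leq k_1,\ \mathbf{0} \leq \mathbf{Z} \leq \mathbf{E},\ -\gamma \mathbf{Z} \leq\mathbf{Y} \leq \gamma \mathbf{Z},\\ & \mathbf{P}_c \succeq 0,\ \mathbb{I} - \mathbf{P}_c \succeq 0,\ \mathrm{tr}(\mathbf{P}_c) \leq k_0,\ \mathbf{P}_r \succeq 0,\ \mathbb{I} - \mathbf{P}_r \succeq 0,\ \mathrm{tr}(\mathbf{P}_r) \leq k_0,\\ & \begin{pmatrix}\mathbf{\Theta} & \mathbf{X}\\ \mathbf{X}^T & \mathbf{P}_c\end{pmatrix} \succeq 0,\ \begin{pmatrix}\beta\mathbf{P}_r & \mathbf{X}\\ \mathbf{X}^T & \beta\mathbf{P}_c\end{pmatrix} \succeq 0.\end{aligned}$$ For any input data $\mathbf{D}, k_0, k_1$ and hyperparameters $\lambda, \mu$, the optimal value of (B) is no less than the optimal value of (A).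
   Context: Both (A) and (B) are convex relaxations of the sparse plus low-rank problem $\min_{\mathbf{X},\mathbf{Y}} \Vert\mathbf{D}-\mathbf{X}-\mathbf{Y}\Vert_F^2+\lambda\Vert\mathbf{X}\Vert_F^2+\mu\Vert\mathbf{Y}\Vert_F^2$ s.t. $\mathrm{Rank}(\mathbf{X})\le k_0$, $\Vert\mathbf{Y}\Vert_0\le k_1$, under the additional assumptions that the spectral norm of $\mathbf{X}$ is at most $\beta$ and the entrywise $\ell_\infty$ norm of $\mathbf{Y}$ is at most $\gamma$. (A) is the relaxation of Lee and Zou, based on $\mathrm{Rank}(\mathbf{X})\ge \frac{1}{\beta}\Vert\mathbf{X}\Vert_*$ and $\Vert\mathbf{Y}\Vert_0\ge\frac{1}{\gamma}\Vert\mathbf{Y}\Vert_1$; (B) is the paper's perspective-based relaxation strengthened with these bounds. $\circ$ denotes the entrywise (Hadamard) product and inequalities between matrices are entrywise except $\succeq$, which denotes positive semidefiniteness; $\mathbb{I}$ is the identity matrix.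
   Formalization: In relaxation (B) the constraint $\mathbf{Y} \circ \mathbf{Y} \leq \boldsymbol{\alpha} \circ \mathbf{Z}$ comes with $\mathbf{0} \leq \boldsymbol{\alpha}$, so alpha is entrywise nonnegative. The statement above fails without it. *)

theory Defs
  imports "HOL-Analysis.Analysis"
begin

definition psd :: "real^'m^'m \<Rightarrow> bool" where
  "psd A \<longleftrightarrow> transpose A = A \<and> (\<forall>x. 0 \<le> x \<bullet> (A *v x))"

definition block2 :: "real^'n^'n \<Rightarrow> real^'n^'n \<Rightarrow> real^'n^'n \<Rightarrow> real^'n^'n \<Rightarrow> real^('n + 'n)^('n + 'n)" where
  "block2 A B C D = (\<chi> i j. case (i, j) of
      (Inl a, Inl b) \<Rightarrow> A $ a $ b
    | (Inl a, Inr b) \<Rightarrow> B $ a $ b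
    | (Inr a, Inl b) \<Rightarrow> C $ a $ b
    | (Inr a, Inr b) \<Rightarrow> D $ a $ b)"

definition hadamard :: "real^'n^'m \<Rightarrow> real^'n^'m \<Rightarrow> real^'n^'m" where
  "hadamard A B = (\<chi> i j. A $ i $ j * B $ i $ j)"

definition mle :: "real^'n^'m \<Rightarrow> real^'n^'m \<Rightarrow> bool" where
  "mle A B \<longleftrightarrow> (\<forall>i j. A $ i $ j \<le> B $ i $ j)"

definition ones :: "real^'n^'m" where
  "ones = (\<chi> i j. 1)"

definition finner :: "real^'n^'m \<Rightarrow> real^'n^'m \<Rightarrow> real" where
  "finner A B = (\<Sum>i\<in>UNIV. \<Sum>j\<in>UNIV. A $ i $ j * B $ i $ j)"

definition fro2 :: "real^'n^'m \<Rightarrow> real" where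
  "fro2 A = (\<Sum>i\<in>UNIV. \<Sum>j\<in>UNIV. (A $ i $ j)\<^sup>2)"

definition feasA :: "nat \<Rightarrow> nat \<Rightarrow> real \<Rightarrow> real \<Rightarrow>
    ((real^'n^'n) \<times> (real^'n^'n) \<times> (real^'n^'n) \<times> (real^'n^'n) \<times> (real^'n^'n)) set" where
  "feasA k0 k1 \<beta> \<gamma> = {(X, Y, V, W1, W2).
      mle (- V) Y \<and> mle Y V \<and>
      (1 / \<gamma>) * finner ones V \<le> real k1 \<and>
      (1 / (2 * \<beta>)) * trace W1 + (1 / (2 * \<beta>)) * trace W2 \<le> real k0 \<and>
      psd (block2 W1 X (transpose X) W2)}"

definition objA :: "real^'n^'n \<Rightarrow> real \<Rightarrow> real \<Rightarrow>
    ((real^'n^'n) \<times> (real^'n^'n) \<times> (real^'n^'n) \<times> (real^'n^'n) \<times> (real^'n^'n)) \<Rightarrow> real" where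
  "objA D lam mu = (\<lambda>(X, Y, V, W1, W2). fro2 (D - X - Y) + lam * fro2 X + mu * fro2 Y)"

(* The perspective constraint Y o Y <= alpha o Z is read as the rotated
   second-order cone constraint, which includes alpha >= 0. *)
definition feasB :: "nat \<Rightarrow> nat \<Rightarrow> real \<Rightarrow> real \<Rightarrow>
    ((real^'n^'n) \<times> (real^'n^'n) \<times> (real^'n^'n) \<times> (real^'n^'n) \<times> (real^'n^'n) \<times> (real^'n^'n) \<times> (real^'n^'n)) set" where
  "feasB k0 k1 \<beta> \<gamma> = {(X, Y, Z, Pc, Pr, \<Theta>, \<alpha>).
      mle (hadamard Y Y) (hadamard \<alpha> Z) \<and> mle 0 \<alpha> \<and>
      finner ones Z \<le> real k1 \<and> mle 0 Z \<and> mle Z ones \<and>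
      mle (- (\<gamma> *\<^sub>R Z)) Y \<and> mle Y (\<gamma> *\<^sub>R Z) \<and>
      psd Pc \<and> psd (mat 1 - Pc) \<and> trace Pc \<le> real k0 \<and>
      psd Pr \<and> psd (mat 1 - Pr) \<and> trace Pr \<le> real k0 \<and>
      psd (block2 \<Theta> X (transpose X) Pc) \<and>
      psd (block2 (\<beta> *\<^sub>R Pr) X (transpose X) (\<beta> *\<^sub>R Pc))}"

definition objB :: "real^'n^'n \<Rightarrow> real \<Rightarrow> real \<Rightarrow>
    ((real^'n^'n) \<times> (real^'n^'n) \<times> (real^'n^'n) \<times> (real^'n^'n) \<times> (real^'n^'n) \<times> (real^'n^'n) \<times> (real^'n^'n)) \<Rightarrow> real" where
  "objB D lam mu = (\<lambda>(X, Y, Z, Pc, Pr, \<Theta>, \<alpha>).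
      fro2 (D - X - Y) + lam * trace \<Theta> + mu * finner ones \<alpha>)"

end

theory Submission
  imports Defs
begin

(* Every feasible point (X, Y, Z, Pc, Pr, \<Theta>, \<alpha>) of (B) yields the feasible point
   (X, Y, \<gamma> Z, \<beta> Pr, \<beta> Pc) of (A), and the objective of (A) there is no larger:
   testing the psd block matrix [\<Theta>, X; X^T, Pc] against (e_i, -X^T e_i) and using Pc \<le> I
   gives \<Sigma>_j X_ij^2 \<le> \<Theta>_ii, hence \<parallel>X\<parallel>_F^2 \<le> tr \<Theta>; and Y_ij^2 \<le> \<alpha>_ij Z_ij \<le> \<alpha>_ij
   since 0 \<le> \<alpha> and Z \<le> E.  The zero point is feasible for (B), so the infimum of (B)
   is over a nonempty set and dominates that of (A). *)

definition vec_join :: "real^'n \<Rightarrow> real^'n \<Rightarrow> real^('n + 'n)" where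
  "vec_join u w = (\<chi> k. case k of Inl a \<Rightarrow> u $ a | Inr b \<Rightarrow> w $ b)"

lemma sum_UNIV_Plus:
  "(\<Sum>k\<in>(UNIV :: ('a::finite + 'b::finite) set). g k) = (\<Sum>a\<in>UNIV. g (Inl a)) + (\<Sum>b\<in>UNIV. g (Inr b))"
  by (subst UNIV_Plus_UNIV [symmetric], subst sum.Plus) auto

lemma inner_block2_vec_join:
  "vec_join u w \<bullet> (block2 A B C D *v vec_join u w) =
     u \<bullet> (A *v u) + u \<bullet> (B *v w) + w \<bullet> (C *v u) + w \<bullet> (D *v w)"
  unfolding inner_vec_def matrix_vector_mult_def vec_join_def block2_def
  by (simp add: sum_UNIV_Plus distrib_left sum.distrib)

lemma psd_block2_row_sum_squares_le_diag:
  fixes T X P :: "real^'n^'n"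
  assumes "psd (block2 T X (transpose X) P)" and "psd (mat 1 - P)"
  shows "(\<Sum>j\<in>UNIV. (X $ i $ j)\<^sup>2) \<le> T $ i $ i"
proof -
  define u :: "real^'n" where "u = axis i 1"
  define w :: "real^'n" where "w = (\<chi> j. - X $ i $ j)"
  let ?s = "\<Sum>j\<in>UNIV. (X $ i $ j)\<^sup>2"
  have block_nonneg: "0 \<le> vec_join u w \<bullet> (block2 T X (transpose X) P *v vec_join u w)"
    using assms(1) unfolding psd_def by blast
  have P_le_one: "w \<bullet> (P *v w) \<le> w \<bullet> w"
    using assms(2) unfolding psd_def
    by (metis diff_ge_0_iff_ge inner_diff_right matrix_vector_mul_lid matrix_vector_mult_diff_rdistrib)
  have "u \<bullet> (T *v u) = T $ i $ i"
    unfolding u_def inner_vec_def matrix_vector_mult_def axis_def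
    by (simp add: mult.commute[of "T $ _ $ _"] if_distrib[of "\<lambda>a. a * y" for y] cong: if_cong)
  moreover have "u \<bullet> (X *v w) = - ?s"
    unfolding u_def w_def inner_vec_def matrix_vector_mult_def axis_def
    by (simp add: if_distrib[of "\<lambda>a. a * y" for y] power2_eq_square sum_negf cong: if_cong)
  moreover have "w \<bullet> (transpose X *v u) = - ?s"
    unfolding u_def w_def inner_vec_def matrix_vector_mult_def axis_def transpose_def
    by (simp add: if_distrib[of "\<lambda>a. y * a" for y] power2_eq_square sum_negf cong: if_cong)
  moreover have "w \<bullet> w = ?s"
    unfolding w_def inner_vec_def by (simp add: power2_eq_square)
  ultimately show ?thesis
    using block_nonneg P_le_one inner_block2_vec_join[of u w T X "transpose X" P] by linarith
qed

lemma fro2_le_trace_if_psd_block2: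
  fixes T X P :: "real^'n^'n"
  assumes "psd (block2 T X (transpose X) P)" and "psd (mat 1 - P)"
  shows "fro2 X \<le> trace T"
  unfolding fro2_def trace_def
  using psd_block2_row_sum_squares_le_diag[OF assms] by (rule sum_mono)

lemma fro2_le_finner_ones_if_perspective:
  fixes Y Z \<alpha> :: "real^'n^'m"
  assumes "mle (hadamard Y Y) (hadamard \<alpha> Z)" and "mle 0 \<alpha>" and "mle Z ones"
  shows "fro2 Y \<le> finner ones \<alpha>"
  unfolding fro2_def finner_def
proof (intro sum_mono)
  fix i j
  have "(Y $ i $ j)\<^sup>2 \<le> \<alpha> $ i $ j * Z $ i $ j"
    using assms(1) by (simp add: mle_def hadamard_def power2_eq_square)
  also have "\<dots> \<le> \<alpha> $ i $ j"
    using assms(2,3) by (simp add: mle_def ones_def mult_left_le)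
  finally show "(Y $ i $ j)\<^sup>2 \<le> ones $ i $ j * \<alpha> $ i $ j"
    by (simp add: ones_def)
qed

lemma psd_0: "psd (0 :: real^'n^'n)"
  unfolding psd_def by (simp add: transpose_def vec_eq_iff)

lemma psd_mat_1: "psd (mat 1 :: real^'n^'n)"
  unfolding psd_def by simp

lemma block2_0: "block2 0 0 0 0 = 0"
  unfolding block2_def by (simp add: vec_eq_iff split: sum.split)

lemma transpose_0: "transpose 0 = 0"
  by (simp add: transpose_def vec_eq_iff)

lemma trace_scaleR: "trace (c *\<^sub>R A) = c * trace (A :: real^'n^'n)"
  by (simp add: trace_def sum_distrib_left)

lemma finner_scaleR_right: "finner A (c *\<^sub>R B) = c * finner A (B :: real^'n^'m)"
  by (simp add: finner_def sum_distrib_left mult.left_commute)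

lemma zero_in_feasB: "(0, 0, 0, 0, 0, 0, 0) \<in> feasB k0 k1 \<beta> \<gamma>"
  unfolding feasB_def
  by (simp add: psd_0 psd_mat_1 block2_0 transpose_0 mle_def hadamard_def finner_def ones_def trace_def)

lemma feasB_imp_feasA:
  assumes "(X, Y, Z, Pc, Pr, \<Theta>, \<alpha>) \<in> feasB k0 k1 \<beta> \<gamma>" and "0 < \<beta>" and "0 < \<gamma>"
  shows "(X, Y, \<gamma> *\<^sub>R Z, \<beta> *\<^sub>R Pr, \<beta> *\<^sub>R Pc) \<in> feasA k0 k1 \<beta> \<gamma>"
proof -
  note B = assms(1)[unfolded feasB_def, simplified]
  have "(1 / \<gamma>) * finner ones (\<gamma> *\<^sub>R Z) \<le> real k1"
    using B assms(3) by (simp add: finner_scaleR_right)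
  moreover have "(1 / (2 * \<beta>)) * trace (\<beta> *\<^sub>R Pr) + (1 / (2 * \<beta>)) * trace (\<beta> *\<^sub>R Pc) \<le> real k0"
    using B assms(2) by (simp add: trace_scaleR field_simps)
  ultimately show ?thesis
    using B unfolding feasA_def by simp
qed

lemma objA_le_objB:
  assumes "(X, Y, Z, Pc, Pr, \<Theta>, \<alpha>) \<in> feasB k0 k1 \<beta> \<gamma>" and "0 \<le> lam" and "0 \<le> mu"
  shows "objA D lam mu (X, Y, V, W1, W2) \<le> objB D lam mu (X, Y, Z, Pc, Pr, \<Theta>, \<alpha>)"
proof -
  note B = assms(1)[unfolded feasB_def, simplified]
  have "fro2 X \<le> trace \<Theta>"
    using B by (intro fro2_le_trace_if_psd_block2) auto
  moreover have "fro2 Y \<le> finner ones \<alpha>"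
    using B by (intro fro2_le_finner_ones_if_perspective) auto
  ultimately show ?thesis
    unfolding objA_def objB_def using assms(2,3) by (simp add: add_mono mult_left_mono)
qed

lemma feasB_dominated_by_feasA:
  assumes "p \<in> feasB k0 k1 \<beta> \<gamma>" and "0 < \<beta>" and "0 < \<gamma>" and "0 \<le> lam" and "0 \<le> mu"
  shows "\<exists>q \<in> feasA k0 k1 \<beta> \<gamma>. objA D lam mu q \<le> objB D lam mu p"
proof -
  obtain X Y Z Pc Pr \<Theta> \<alpha> where p: "p = (X, Y, Z, Pc, Pr, \<Theta>, \<alpha>)"
    by (cases p) auto
  show ?thesis
  proof
    show "(X, Y, \<gamma> *\<^sub>R Z, \<beta> *\<^sub>R Pr, \<beta> *\<^sub>R Pc) \<in> feasA k0 k1 \<beta> \<gamma>"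
      using assms(1-3) unfolding p by (rule feasB_imp_feasA)
    show "objA D lam mu (X, Y, \<gamma> *\<^sub>R Z, \<beta> *\<^sub>R Pr, \<beta> *\<^sub>R Pc) \<le> objB D lam mu p"
      using assms(1,4,5) unfolding p by (rule objA_le_objB)
  qed
qed

lemma objA_nonneg:
  assumes "0 \<le> lam" and "0 \<le> mu"
  shows "0 \<le> objA D lam mu q"
  using assms unfolding objA_def fro2_def by (auto simp: sum_nonneg split: prod.split)

theorem proposition11:
  fixes D :: "real^'n^'n"
    and k0 k1 :: nat
    and lam mu \<beta> \<gamma> :: real
  assumes "0 < k0" and "0 < k1"
    and "0 < lam" and "0 < mu"
    and "0 < \<beta>" and "0 < \<gamma>"
  shows "(INF p \<in> feasB k0 k1 \<beta> \<gamma>. objB D lam mu p)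
           \<ge> (INF q \<in> feasA k0 k1 \<beta> \<gamma>. objA D lam mu q)"
proof (rule cINF_mono)
  show "feasB k0 k1 \<beta> \<gamma> \<noteq> {}"
    using zero_in_feasB by blast
  show "bdd_below (objA D lam mu ` feasA k0 k1 \<beta> \<gamma>)"
    using objA_nonneg[of lam mu D] assms(3,4) by (intro bdd_belowI2[of _ 0]) auto
  show "\<exists>q \<in> feasA k0 k1 \<beta> \<gamma>. objA D lam mu q \<le> objB D lam mu p"
    if "p \<in> feasB k0 k1 \<beta> \<gamma>" for p
    using that assms(3-6) by (intro feasB_dominated_by_feasA) auto
qed

end
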